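(* Under the standing assumptions below, if $F\in\mathcal N$ satisfies $\mathcal B(F)=F$, then $F(\gamma,x,s)\le D(\gamma,x,s)$ for all $\gamma\in\mathbb R^I_+$, $x\in\mathcal X$, $s\in\mathcal S$.
   Context: Setup. Let $\mathcal S$ be a finite set and $(s_t)_{t\ge0}$ a Markov chain on $\mathcal S$ with transition probabilities $\pi(s'|s)>0$ for all $s,s'\in\mathcal S$; for $s^t=(s_0,\dots,s_t)\in\mathcal S^{t+1}$ write $\pi^t(s^t|s_0)$ for its probability given $s_0$ and $\mathbb E_{s_t}$ for expectation over future shocks given $s^t$. Let $\mathcal A\subset\mathbb R^n$ be a finite set, $\mathcal X\subseteq\mathbb R^m$ a countable set, $\zeta:\mathcal X\times\mathcal A\times\mathcal S\to\mathcal X$, $p:\mathcal X\times\mathcal A\times\mathcal S\to\mathbb R$, $r,g^1,\dots,g^I$ bounded real functions on $\mathcal X\times\mathcal A\times\mathcal S$, $\bar g^i\in\mathbb R$, $\beta\in(0,1)$. A plan is $a=(a(s^t))_{t,s^t}$, $a(s^t)\in\mathcal A$, inducing $x(s^0)=x_0$, $x(s^{t+1})=\zeta(x(s^t),a(s^t),s_t)$. $\tilde{\mathcal A}(x,s)=\{a\in\mathcal A:p(x,a,s)\ge0\}$; $\tilde{\mathcal A}^\infty(x_0)$ is the set of plans with $a(s^t)\in\tilde{\mathcal A}(x(s^t),s_t)$ for all $t,s^t$. A plan is feasible for $(x_0,s_0)$ if it lies in $\tilde{\mathcal A}^\infty(x_0)$ and $\mathbb E_{s_t}\sum_{n\ge0}\beta^ng^i(x(s^{t+n}),a(s^{t+n}),s_{t+n})\ge\bar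 g^i$ for all $t,s^t,i$. Standing assumption: for every $(x_0,s_0)$ a feasible plan exists. Pre-action histories $h^t=(s_0,a_0,\dots,s_{t-1},a_{t-1},s_t)\in\mathcal H^t=\mathcal S^{t+1}\times\mathcal A^t$; a plan generates $h^t=(s_0,a(s^0),\dots,a(s^{t-1}),s_t)$ along $s^t$. Dual value: $\Lambda$ is the set of $(\lambda^i(h^t))_{t,h^t,i}$, $\lambda^i(h^t)\ge0$, $\sum_t\sum_{h^t}\sum_i\beta^t\lambda^i(h^t)\pi^t(s^t|s_0)<\infty$. $L(a,\lambda;\gamma,x_0,s_0)=\mathbb E_{s_0}\sum_t\beta^t\big[r(x(s^t),a(s^t),s_t)+\sum_i\gamma^ig^i(x(s^t),a(s^t),s_t)+\sum_i\lambda^i(h^t)(\sum_{n\ge0}\beta^ng^i(x(s^{t+n}),a(s^{t+n}),s_{t+n})-\bar g^i)\big]$ and $D(\gamma,x_0,s_0)=\inf_{\lambda\in\Lambda}\sup_{a\in\tilde{\mathcal A}^\infty(x_0)}L$. Function spaces. $L=(\|r\|_\infty+\sum_i\|g^i\|_\infty)/(1-\beta)$ (a constant, not to be confused with the Lagrangian), $B(k)=\{\gamma\in\mathbb R^I_+:\|\gamma\|_\infty\le k\}$, $\mathcal S=\{s_1,\dots,s_{|\mathcal S|}\}$, $\mathcal X=\{x_1,x_2,\dots\}$. $\mathcal M$: functions $F:\mathbb R^I_+\times\mathcal X\times\mathcal S\to\mathbb R$ with $F(\cdot,x,s)\in L^\infty(B(k))$ for all $k$ and $\|F\|_{\mathcal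 M}=\sum_i2^{-i}\sum_j2^{-j}\sum_{k\ge1}2^{-k}\|F(\cdot,x_j,s_i)\|_{L^\infty(B(k))}<\infty$. $\mathcal N$: those $F\in\mathcal M$ with, for all $x,s$, (i) $F(\cdot,x,s)$ convex; (ii) $|F(\gamma_1,x,s)-F(\gamma_2,x,s)|\le L\|\gamma_1-\gamma_2\|_1$; (iii) $F(\gamma,x,s)\ge v^0+\sum_i\gamma^iv^i$ for every feasible plan for $(x,s)$, $v^0=\mathbb E_s\sum_t\beta^tr(\cdot)$, $v^i=\mathbb E_s\sum_t\beta^tg^i(\cdot)$; (iv) $F(\gamma,x,s)\le(1+\sum_i\gamma^i)L$. Bellman operator: $\mathcal B(F)(\gamma,x,s)=\inf_{\lambda\in\mathbb R^I_+}\sup_{a\in\tilde{\mathcal A}(x,s)}\big[r(x,a,s)+\sum_i(\gamma^ig^i(x,a,s)+\lambda^i(g^i(x,a,s)-\bar g^i))+\beta\mathbb E_sF(\gamma+\lambda,\zeta(x,a,s),s')\big]$, $s'\sim\pi(\cdot|s)$. *)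

theory Defs
  imports "HOL-Analysis.Analysis" "HOL-Probability.Essential_Supremum" "HOL-Library.Countable"
begin

text \<open>States: a finite type 's; actions: a finite type 'a (the finite set A);
  endogenous states: a countable type 'x (the countable set X); constraint indices: a finite
  type 'i (so I = CARD('i)); multipliers gamma, lambda: vectors real^'i.
  Transition probability pi(s'|s) is written  P s s'.
  A shock history s^t = (s_0,...,s_t) is represented as the list [s_t, ..., s_0]
  (newest first, nonempty); its current shock is  hd h  and its initial shock  last h.\<close>

fun xp :: "('x \<Rightarrow> 'a \<Rightarrow> 's \<Rightarrow> 'x) \<Rightarrow> ('s list \<Rightarrow> 'a) \<Rightarrow> 'x \<Rightarrow> 's list \<Rightarrow> 'x" where
  "xp \<zeta> a x0 [] = x0"
| "xp \<zeta> a x0 [s] = x0"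
| "xp \<zeta> a x0 (s' # s # h) = \<zeta> (xp \<zeta> a x0 (s # h)) (a (s # h)) s"

(* conditional probability of the extension e (newest first) of history h *)
fun cp :: "('s \<Rightarrow> 's \<Rightarrow> real) \<Rightarrow> 's list \<Rightarrow> 's list \<Rightarrow> real" where
  "cp P [] h = 1"
| "cp P (s' # e) h = P (hd (e @ h)) s' * cp P e h"

(* pre-action history h^t generated by plan a along shock history h:
   the list of past (s_k, a(s^k)) pairs, newest first; the current shock is hd h *)
fun genh :: "('s list \<Rightarrow> 'a) \<Rightarrow> 's list \<Rightarrow> ('s \<times> 'a) list" where
  "genh a [] = []"
| "genh a [s] = []"
| "genh a (s' # s # h) = (s, a (s # h)) # genh a (s # h)"

definition cont :: "real \<Rightarrow> ('s::finite \<Rightarrow> 's \<Rightarrow> real) \<Rightarrow> ('x \<Rightarrow> 'a \<Rightarrow> 's \<Rightarrow> 'x)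
    \<Rightarrow> ('s list \<Rightarrow> 'a) \<Rightarrow> 'x \<Rightarrow> ('x \<Rightarrow> 'a \<Rightarrow> 's \<Rightarrow> real) \<Rightarrow> 's list \<Rightarrow> real" where
  "cont \<beta> P \<zeta> a x0 f h =
     (\<Sum>n. \<beta> ^ n * (\<Sum>e\<in>{e::'s list. length e = n}.
        cp P e h * f (xp \<zeta> a x0 (e @ h)) (a (e @ h)) (hd (e @ h))))"

definition Aadm :: "('x \<Rightarrow> 'a \<Rightarrow> 's \<Rightarrow> real) \<Rightarrow> 'x \<Rightarrow> 's \<Rightarrow> 'a set" where
  "Aadm p x s = {u. 0 \<le> p x u s}"

definition Ainf :: "('x \<Rightarrow> 'a \<Rightarrow> 's \<Rightarrow> real) \<Rightarrow> ('x \<Rightarrow> 'a \<Rightarrow> 's \<Rightarrow> 'x) \<Rightarrow> 'x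
    \<Rightarrow> ('s list \<Rightarrow> 'a) set" where
  "Ainf p \<zeta> x0 = {a. \<forall>h. h \<noteq> [] \<longrightarrow> a h \<in> Aadm p (xp \<zeta> a x0 h) (hd h)}"

definition feasible :: "real \<Rightarrow> ('s::finite \<Rightarrow> 's \<Rightarrow> real) \<Rightarrow> ('x \<Rightarrow> 'a \<Rightarrow> 's \<Rightarrow> 'x)
    \<Rightarrow> ('x \<Rightarrow> 'a \<Rightarrow> 's \<Rightarrow> real) \<Rightarrow> ('i \<Rightarrow> 'x \<Rightarrow> 'a \<Rightarrow> 's \<Rightarrow> real) \<Rightarrow> ('i \<Rightarrow> real)
    \<Rightarrow> ('s list \<Rightarrow> 'a) \<Rightarrow> 'x \<Rightarrow> 's \<Rightarrow> bool" where
  "feasible \<beta> P \<zeta> p g gbar a x0 s0 \<longleftrightarrow>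
     a \<in> Ainf p \<zeta> x0 \<and>
     (\<forall>h i. h \<noteq> [] \<and> last h = s0 \<longrightarrow> gbar i \<le> cont \<beta> P \<zeta> a x0 (g i) h)"

definition lagr :: "real \<Rightarrow> ('s::finite \<Rightarrow> 's \<Rightarrow> real) \<Rightarrow> ('x \<Rightarrow> 'a \<Rightarrow> 's \<Rightarrow> 'x)
    \<Rightarrow> ('x \<Rightarrow> 'a \<Rightarrow> 's \<Rightarrow> real) \<Rightarrow> ('i::finite \<Rightarrow> 'x \<Rightarrow> 'a \<Rightarrow> 's \<Rightarrow> real) \<Rightarrow> ('i \<Rightarrow> real)
    \<Rightarrow> ('s list \<Rightarrow> 'a) \<Rightarrow> (('s \<times> 'a) list \<Rightarrow> 's \<Rightarrow> 'i \<Rightarrow> real) \<Rightarrow> real^'i \<Rightarrow> 'x \<Rightarrow> 's \<Rightarrow> real" where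
  "lagr \<beta> P \<zeta> r g gbar a lam \<gamma> x0 s0 =
     (\<Sum>t. \<beta> ^ t * (\<Sum>e\<in>{e::'s list. length e = t}. cp P e [s0] *
        (let h = e @ [s0]; x = xp \<zeta> a x0 h; u = a h; s = hd h in
          r x u s + (\<Sum>i\<in>UNIV. \<gamma>$i * g i x u s)
          + (\<Sum>i\<in>UNIV. lam (genh a h) s i * (cont \<beta> P \<zeta> a x0 (g i) h - gbar i)))))"

(* the multiplier set Lambda (for initial shock s0); a pre-action history
   h^t = (s_0,a_0,...,s_{t-1},a_{t-1},s_t) is the pair (past pairs newest first, s_t) *)
definition LamSet :: "real \<Rightarrow> ('s::finite \<Rightarrow> 's \<Rightarrow> real) \<Rightarrow> 's
    \<Rightarrow> (('s \<times> 'a::finite) list \<Rightarrow> 's \<Rightarrow> 'i::finite \<Rightarrow> real) set" where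
  "LamSet \<beta> P s0 = {lam. (\<forall>hh s i. 0 \<le> lam hh s i) \<and>
     summable (\<lambda>t. \<Sum>e\<in>{e::'s list. length e = t}. \<Sum>acts\<in>{acts::'a list. length acts = t}.
        \<Sum>i\<in>UNIV. \<beta> ^ t * lam (zip (tl (e @ [s0])) acts) (hd (e @ [s0])) i * cp P e [s0])}"

definition Dval :: "real \<Rightarrow> ('s::finite \<Rightarrow> 's \<Rightarrow> real) \<Rightarrow> ('x \<Rightarrow> 'a::finite \<Rightarrow> 's \<Rightarrow> 'x)
    \<Rightarrow> ('x \<Rightarrow> 'a \<Rightarrow> 's \<Rightarrow> real) \<Rightarrow> ('x \<Rightarrow> 'a \<Rightarrow> 's \<Rightarrow> real)
    \<Rightarrow> ('i::finite \<Rightarrow> 'x \<Rightarrow> 'a \<Rightarrow> 's \<Rightarrow> real) \<Rightarrow> ('i \<Rightarrow> real)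
    \<Rightarrow> real^'i \<Rightarrow> 'x \<Rightarrow> 's \<Rightarrow> ereal" where
  "Dval \<beta> P \<zeta> p r g gbar \<gamma> x0 s0 =
     (INF lam\<in>LamSet \<beta> P s0. SUP a\<in>Ainf p \<zeta> x0. ereal (lagr \<beta> P \<zeta> r g gbar a lam \<gamma> x0 s0))"

definition orthant :: "(real^'i) set" where
  "orthant = {\<gamma>. \<forall>i. 0 \<le> \<gamma>$i}"

definition Bk :: "real \<Rightarrow> (real^'i) set" where
  "Bk k = {\<gamma>. \<forall>i. 0 \<le> \<gamma>$i \<and> \<gamma>$i \<le> k}"

definition bellman :: "real \<Rightarrow> ('s::finite \<Rightarrow> 's \<Rightarrow> real) \<Rightarrow> ('x \<Rightarrow> 'a \<Rightarrow> 's \<Rightarrow> 'x)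
    \<Rightarrow> ('x \<Rightarrow> 'a \<Rightarrow> 's \<Rightarrow> real) \<Rightarrow> ('x \<Rightarrow> 'a \<Rightarrow> 's \<Rightarrow> real)
    \<Rightarrow> ('i::finite \<Rightarrow> 'x \<Rightarrow> 'a \<Rightarrow> 's \<Rightarrow> real) \<Rightarrow> ('i \<Rightarrow> real)
    \<Rightarrow> (real^'i \<Rightarrow> 'x \<Rightarrow> 's \<Rightarrow> real) \<Rightarrow> real^'i \<Rightarrow> 'x \<Rightarrow> 's \<Rightarrow> ereal" where
  "bellman \<beta> P \<zeta> p r g gbar F \<gamma> x s =
     (INF lam\<in>orthant. SUP u\<in>Aadm p x s.
        ereal (r x u s + (\<Sum>i\<in>UNIV. \<gamma>$i * g i x u s + lam$i * (g i x u s - gbar i))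
               + \<beta> * (\<Sum>s'\<in>UNIV. P s s' * F (\<gamma> + lam) (\<zeta> x u s) s')))"

definition supn :: "('x \<Rightarrow> 'a \<Rightarrow> 's \<Rightarrow> real) \<Rightarrow> real" where
  "supn f = (SUP z\<in>UNIV. \<bar>f (fst z) (fst (snd z)) (snd (snd z))\<bar>)"

definition Lconst :: "real \<Rightarrow> ('x \<Rightarrow> 'a \<Rightarrow> 's \<Rightarrow> real) \<Rightarrow> ('i::finite \<Rightarrow> 'x \<Rightarrow> 'a \<Rightarrow> 's \<Rightarrow> real) \<Rightarrow> real" where
  "Lconst \<beta> r g = (supn r + (\<Sum>i\<in>UNIV. supn (g i))) / (1 - \<beta>)"

definition linf :: "(real^'i::finite \<Rightarrow> real) \<Rightarrow> real \<Rightarrow> ereal" where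
  "linf f k = esssup (restrict_space lborel (Bk k)) (\<lambda>\<gamma>. ereal \<bar>f \<gamma>\<bar>)"

(* ||F||_M, enumerations s_i, x_j given by to_nat (index to_nat + 1) *)
definition normM :: "(real^'i::finite \<Rightarrow> 'x::countable \<Rightarrow> 's::finite \<Rightarrow> real) \<Rightarrow> ennreal" where
  "normM F = (\<Sum>\<^sub>\<infinity>s\<in>UNIV. ennreal ((1/2) ^ (to_nat s + 1)) *
              (\<Sum>\<^sub>\<infinity>x\<in>UNIV. ennreal ((1/2) ^ (to_nat x + 1)) *
                (\<Sum>k. ennreal ((1/2) ^ (k + 1)) * e2ennreal (linf (\<lambda>\<gamma>. F \<gamma> x s) (real (k + 1))))))"

definition inM :: "(real^'i::finite \<Rightarrow> 'x::countable \<Rightarrow> 's::finite \<Rightarrow> real) \<Rightarrow> bool" where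
  "inM F \<longleftrightarrow>
     (\<forall>x s (k::nat). (\<lambda>\<gamma>. F \<gamma> x s) \<in> borel_measurable (restrict_space lborel (Bk (real k)))
        \<and> linf (\<lambda>\<gamma>. F \<gamma> x s) (real k) < \<infinity>) \<and> normM F < \<infinity>"

definition inN :: "real \<Rightarrow> ('s::finite \<Rightarrow> 's \<Rightarrow> real) \<Rightarrow> ('x::countable \<Rightarrow> 'a \<Rightarrow> 's \<Rightarrow> 'x)
    \<Rightarrow> ('x \<Rightarrow> 'a \<Rightarrow> 's \<Rightarrow> real) \<Rightarrow> ('x \<Rightarrow> 'a \<Rightarrow> 's \<Rightarrow> real)
    \<Rightarrow> ('i::finite \<Rightarrow> 'x \<Rightarrow> 'a \<Rightarrow> 's \<Rightarrow> real) \<Rightarrow> ('i \<Rightarrow> real)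
    \<Rightarrow> (real^'i \<Rightarrow> 'x \<Rightarrow> 's \<Rightarrow> real) \<Rightarrow> bool" where
  "inN \<beta> P \<zeta> p r g gbar F \<longleftrightarrow> inM F \<and>
     (\<forall>x s.
        convex_on orthant (\<lambda>\<gamma>. F \<gamma> x s)
      \<and> (\<forall>\<gamma>1\<in>orthant. \<forall>\<gamma>2\<in>orthant.
           \<bar>F \<gamma>1 x s - F \<gamma>2 x s\<bar> \<le> Lconst \<beta> r g * (\<Sum>i\<in>UNIV. \<bar>\<gamma>1$i - \<gamma>2$i\<bar>))
      \<and> (\<forall>a. feasible \<beta> P \<zeta> p g gbar a x s \<longrightarrow>
           (\<forall>\<gamma>\<in>orthant. cont \<beta> P \<zeta> a x r [s] + (\<Sum>i\<in>UNIV. \<gamma>$i * cont \<beta> P \<zeta> a x (g i) [s])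
                          \<le> F \<gamma> x s))
      \<and> (\<forall>\<gamma>\<in>orthant. F \<gamma> x s \<le> (1 + (\<Sum>i\<in>UNIV. \<gamma>$i)) * Lconst \<beta> r g))"

end

theory Submission
  imports Defs
begin

(* Fix multipliers \<lambda> \<in> \<Lambda>. Starting from \<gamma>, play at every history h^t a maximiser of the
   Bellman right-hand side at the accumulated multiplier \<gamma>_t = \<gamma> + \<Sum>_{k<t} \<lambda>(h^k) with
   increment \<lambda>(h^t); the fixed-point property says such a maximiser reaches F(\<gamma>_t, x_t, s_t).
   With C^i(h^t) the continuation value of g^i under this plan, the potential
     \<Phi>(h^t) = F(\<gamma>_t, x_t, s_t) - \<Sum>_i (\<gamma>_t - \<gamma>)^i C^i(h^t)
   then satisfies \<Phi>(h^t) \<le> \<ell>(h^t) + \<beta> E \<Phi>(h^(t+1)), where \<ell> is the integrand of the Lagrangian.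
   Telescoping bounds F(\<gamma>, x, s) by a partial sum of L(plan, \<lambda>) plus a remainder of order
   \<beta>^T + \<beta>^T E \<Sum>_i (\<gamma>_T - \<gamma>)^i; the latter tends to 0 because \<lambda> \<in> \<Lambda> makes
   \<Sum>_t \<beta>^t E \<Sum>_i \<lambda>^i(h^t) finite. So F \<le> sup_a L(a, \<lambda>) for every \<lambda>, i.e. F \<le> D.
   Only the fixed-point property and the upper bound (iv) of N are needed. *)

lemma sum_lists_length_Suc:
  "(\<Sum>e\<in>{e::'s::finite list. length e = Suc n}. f e) = (\<Sum>s\<in>UNIV. \<Sum>e\<in>{e. length e = n}. f (s # e))"
proof -
  have eq: "{e::'s list. length e = Suc n} = (\<lambda>(s, e). s # e) ` (UNIV \<times> {e. length e = n})"
    by (auto simp: length_Suc_conv image_iff)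
  have inj: "inj_on (\<lambda>(s, e). s # e) (UNIV \<times> {e::'s list. length e = n})"
    by (auto simp: inj_on_def)
  show ?thesis
    unfolding eq sum.reindex[OF inj] by (auto simp: sum.cartesian_product intro!: sum.cong)
qed

definition ext_expect :: "('s::finite \<Rightarrow> 's \<Rightarrow> real) \<Rightarrow> nat \<Rightarrow> 's list \<Rightarrow> ('s list \<Rightarrow> real) \<Rightarrow> real" where
  "ext_expect P n h f = (\<Sum>e\<in>{e. length e = n}. cp P e h * f (e @ h))"

lemma ext_expect_0 [simp]: "ext_expect P 0 h f = f h"
  by (simp add: ext_expect_def)

lemma ext_expect_Suc:
  "ext_expect P (Suc n) h f = ext_expect P n h (\<lambda>h'. \<Sum>s\<in>UNIV. P (hd h') s * f (s # h'))"
  unfolding ext_expect_def sum_lists_length_Suc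
  by (subst sum.swap) (simp add: sum_distrib_left sum_distrib_right mult_ac)

lemma ext_expect_Suc_first:
  "ext_expect P (Suc n) h f = (\<Sum>s\<in>UNIV. P (hd h) s * ext_expect P n (s # h) f)"
proof (induction n arbitrary: h f)
  case 0
  then show ?case by (simp add: ext_expect_Suc)
next
  case (Suc n)
  have "ext_expect P (Suc (Suc n)) h f
      = ext_expect P (Suc n) h (\<lambda>h'. \<Sum>s\<in>UNIV. P (hd h') s * f (s # h'))"
    by (rule ext_expect_Suc)
  also have "\<dots> = (\<Sum>s\<in>UNIV. P (hd h) s * ext_expect P n (s # h) (\<lambda>h'. \<Sum>s\<in>UNIV. P (hd h') s * f (s # h')))"
    by (rule Suc.IH)
  also have "\<dots> = (\<Sum>s\<in>UNIV. P (hd h) s * ext_expect P (Suc n) (s # h) f)"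
    by (simp only: ext_expect_Suc)
  finally show ?case .
qed

lemma ext_expect_cong:
  "(\<And>e. length e = n \<Longrightarrow> f (e @ h) = f' (e @ h)) \<Longrightarrow> ext_expect P n h f = ext_expect P n h f'"
  unfolding ext_expect_def by (rule sum.cong) auto

lemma ext_expect_add: "ext_expect P n h (\<lambda>h'. f h' + f' h') = ext_expect P n h f + ext_expect P n h f'"
  unfolding ext_expect_def by (simp add: algebra_simps sum.distrib)

lemma ext_expect_mult_left: "ext_expect P n h (\<lambda>h'. c * f h') = c * ext_expect P n h f"
  unfolding ext_expect_def by (simp add: sum_distrib_left mult_ac)

lemma cont_eq_ext_expect:
  "cont \<beta> P \<zeta> a x0 f h = (\<Sum>n. \<beta> ^ n * ext_expect P n h (\<lambda>h'. f (xp \<zeta> a x0 h') (a h') (hd h')))"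
  unfolding cont_def ext_expect_def by simp

locale stochastic_matrix =
  fixes P :: "'s::finite \<Rightarrow> 's \<Rightarrow> real"
  assumes nonneg: "0 \<le> P s s'"
    and row_sum: "(\<Sum>s'\<in>UNIV. P s s') = 1"
begin

lemma cp_nonneg: "0 \<le> cp P e h"
  by (induction e) (simp_all add: nonneg)

lemma ext_expect_mono:
  "(\<And>e. length e = n \<Longrightarrow> f (e @ h) \<le> f' (e @ h)) \<Longrightarrow> ext_expect P n h f \<le> ext_expect P n h f'"
  unfolding ext_expect_def by (rule sum_mono) (auto intro!: mult_left_mono cp_nonneg)

lemma ext_expect_const [simp]: "ext_expect P n h (\<lambda>_. c) = c"
proof (induction n arbitrary: h)
  case (Suc n)
  then show ?case by (simp add: ext_expect_Suc_first sum_distrib_right[symmetric] row_sum)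
qed simp

lemma ext_expect_nonneg: "(\<And>e. length e = n \<Longrightarrow> 0 \<le> f (e @ h)) \<Longrightarrow> 0 \<le> ext_expect P n h f"
  using ext_expect_mono[of n "\<lambda>_. 0" h f] by simp

lemma abs_ext_expect_le_ext_expect:
  assumes "\<And>e. length e = n \<Longrightarrow> \<bar>f (e @ h)\<bar> \<le> f' (e @ h)"
  shows "\<bar>ext_expect P n h f\<bar> \<le> ext_expect P n h f'"
proof -
  have "ext_expect P n h f \<le> ext_expect P n h f'"
    by (rule ext_expect_mono) (use assms abs_le_D1 in blast)
  moreover have "ext_expect P n h (\<lambda>h'. - 1 * f h') \<le> ext_expect P n h f'"
    by (rule ext_expect_mono) (use assms abs_le_D2 in fastforce)
  ultimately show ?thesis
    using ext_expect_mult_left[where c = "- 1" and f = f] by (simp add: abs_le_iff)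
qed

lemma abs_ext_expect_le:
  "(\<And>e. length e = n \<Longrightarrow> \<bar>f (e @ h)\<bar> \<le> B) \<Longrightarrow> \<bar>ext_expect P n h f\<bar> \<le> B"
  using abs_ext_expect_le_ext_expect[of n f h "\<lambda>_. B"] by simp

end

locale discounted_chain = stochastic_matrix P
  for P :: "'s::finite \<Rightarrow> 's \<Rightarrow> real" +
  fixes \<beta> :: real
  assumes discount_nonneg: "0 \<le> \<beta>"
    and discount_less_one: "\<beta> < 1"
begin

lemma abs_discounted_ext_expect_le:
  assumes "\<And>h'. \<bar>f h'\<bar> \<le> B"
  shows "\<bar>\<beta> ^ n * ext_expect P n h f\<bar> \<le> B * \<beta> ^ n"
proof -
  have "\<bar>ext_expect P n h f\<bar> \<le> B"
    by (rule abs_ext_expect_le) (rule assms)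
  then have "\<beta> ^ n * \<bar>ext_expect P n h f\<bar> \<le> \<beta> ^ n * B"
    by (rule mult_left_mono) (simp add: discount_nonneg)
  then show ?thesis
    using discount_nonneg by (simp add: abs_mult mult.commute)
qed

lemma summable_geometric_bound: "summable (\<lambda>n. B * \<beta> ^ n)"
  using discount_nonneg discount_less_one by (simp add: summable_geometric)

lemma summable_discounted_ext_expect:
  assumes "\<And>h'. \<bar>f h'\<bar> \<le> B"
  shows "summable (\<lambda>n. \<beta> ^ n * ext_expect P n h f)"
  by (rule summable_comparison_test'[OF summable_geometric_bound])
    (use abs_discounted_ext_expect_le[OF assms] in simp)

lemma abs_cont_le:
  assumes "\<And>x u s. \<bar>f x u s\<bar> \<le> B"
  shows "\<bar>cont \<beta> P \<zeta> a x0 f h\<bar> \<le> B / (1 - \<beta>)"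
proof -
  let ?f = "\<lambda>h'. f (xp \<zeta> a x0 h') (a h') (hd h')"
  have bound: "\<bar>\<beta> ^ n * ext_expect P n h ?f\<bar> \<le> B * \<beta> ^ n" for n
    by (rule abs_discounted_ext_expect_le) (rule assms)
  have summable_abs: "summable (\<lambda>n. \<bar>\<beta> ^ n * ext_expect P n h ?f\<bar>)"
    by (rule summable_comparison_test'[OF summable_geometric_bound]) (use bound in simp)
  have "\<bar>\<Sum>n. \<beta> ^ n * ext_expect P n h ?f\<bar> \<le> (\<Sum>n. \<bar>\<beta> ^ n * ext_expect P n h ?f\<bar>)"
    by (rule summable_rabs[OF summable_abs])
  also have "\<dots> \<le> (\<Sum>n. B * \<beta> ^ n)"
    by (rule suminf_le[OF bound summable_abs summable_geometric_bound])
  also have "\<dots> = B / (1 - \<beta>)"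
    using discount_nonneg discount_less_one by (simp add: suminf_mult suminf_geometric)
  finally show ?thesis unfolding cont_eq_ext_expect .
qed

lemma cont_unfold:
  assumes "\<And>x u s. \<bar>f x u s\<bar> \<le> B"
  shows "cont \<beta> P \<zeta> a x0 f h
    = f (xp \<zeta> a x0 h) (a h) (hd h) + \<beta> * (\<Sum>s\<in>UNIV. P (hd h) s * cont \<beta> P \<zeta> a x0 f (s # h))"
proof -
  let ?f = "\<lambda>h'. f (xp \<zeta> a x0 h') (a h') (hd h')"
  have sm: "summable (\<lambda>n. \<beta> ^ n * ext_expect P n h' ?f)" for h'
    by (rule summable_discounted_ext_expect) (rule assms)
  have "(\<Sum>n. \<beta> ^ n * ext_expect P n h ?f) = ?f h + (\<Sum>n. \<beta> ^ Suc n * ext_expect P (Suc n) h ?f)"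
    using suminf_split_head[OF sm[of h]] by simp
  also have "(\<Sum>n. \<beta> ^ Suc n * ext_expect P (Suc n) h ?f)
      = (\<Sum>n. \<Sum>s\<in>UNIV. \<beta> * (P (hd h) s * (\<beta> ^ n * ext_expect P n (s # h) ?f)))"
    by (simp add: ext_expect_Suc_first sum_distrib_left mult_ac)
  also have "\<dots> = (\<Sum>s\<in>UNIV. \<Sum>n. \<beta> * (P (hd h) s * (\<beta> ^ n * ext_expect P n (s # h) ?f)))"
    by (rule suminf_sum) (intro summable_mult sm)
  also have "\<dots> = (\<Sum>s\<in>UNIV. \<beta> * (P (hd h) s * (\<Sum>n. \<beta> ^ n * ext_expect P n (s # h) ?f)))"
    by (intro sum.cong refl) (simp add: suminf_mult sm summable_mult)
  finally show ?thesis
    unfolding cont_eq_ext_expect by (simp add: sum_distrib_left)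
qed

end

text \<open>The partial sums of \<open>y\<close> are bounded by \<open>\<beta> * suminf m / (1 - \<beta>)\<close>, so \<open>y\<close> is summable.\<close>

lemma discounted_accumulation_LIMSEQ_zero:
  fixes y m :: "nat \<Rightarrow> real"
  assumes "0 \<le> \<beta>" "\<beta> < 1"
    and y_0: "y 0 = 0" and y_Suc: "\<And>n. y (Suc n) = \<beta> * (y n + m n)"
    and m_nonneg: "\<And>n. 0 \<le> m n" and "summable m"
  shows "y \<longlonglongrightarrow> 0"
proof -
  have y_nonneg: "0 \<le> y n" for n
    by (induction n) (use assms in \<open>simp_all add: y_0 y_Suc\<close>)
  have partial: "(\<Sum>k\<le>n. y k) \<le> \<beta> * suminf m / (1 - \<beta>)" for n
  proof -
    have unfold: "(\<Sum>k\<le>n. y k) = \<beta> * ((\<Sum>k<n. y k) + (\<Sum>k<n. m k))"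
      unfolding lessThan_Suc_atMost[symmetric]
      by (subst sum.lessThan_Suc_shift)
        (simp add: y_0 y_Suc sum.distrib sum_distrib_left[symmetric] del: sum.lessThan_Suc)
    have "(\<Sum>k<n. y k) \<le> (\<Sum>k\<le>n. y k)"
      by (rule sum_mono2) (auto simp: y_nonneg)
    moreover have "(\<Sum>k<n. m k) \<le> suminf m"
      by (rule sum_le_suminf) (use assms in auto)
    ultimately have "(\<Sum>k\<le>n. y k) \<le> \<beta> * ((\<Sum>k\<le>n. y k) + suminf m)"
      using unfold assms by (simp add: mult_left_mono)
    then show ?thesis
      using assms by (simp add: field_simps algebra_simps)
  qed
  have "summable y"
    by (rule bounded_imp_summable[OF y_nonneg partial])
  then show ?thesis
    by (rule summable_LIMSEQ_zero)
qed

lemma length_genh: "length (genh a h) = length h - 1"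
  by (induction a h rule: genh.induct) auto

lemma genh_eq_zip: "genh a h = zip (tl h) (map snd (genh a h))"
proof -
  have "map fst (genh a h) = tl h"
    by (induction a h rule: genh.induct) auto
  then show ?thesis
    by (metis zip_map_fst_snd)
qed

locale bellman_fixpoint = discounted_chain P \<beta>
  for P :: "'s::finite \<Rightarrow> 's \<Rightarrow> real" and \<beta> :: real +
  fixes \<zeta> :: "'x \<Rightarrow> 'a::finite \<Rightarrow> 's \<Rightarrow> 'x"
    and p r :: "'x \<Rightarrow> 'a \<Rightarrow> 's \<Rightarrow> real"
    and g :: "'i::finite \<Rightarrow> 'x \<Rightarrow> 'a \<Rightarrow> 's \<Rightarrow> real"
    and gbar :: "'i \<Rightarrow> real"
    and F :: "real^'i \<Rightarrow> 'x \<Rightarrow> 's \<Rightarrow> real"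
    and Br Bg Lc :: real
  assumes r_bound: "\<bar>r x u s\<bar> \<le> Br"
    and g_bound: "\<bar>g i x u s\<bar> \<le> Bg"
    and F_upper: "\<gamma> \<in> orthant \<Longrightarrow> F \<gamma> x s \<le> (1 + (\<Sum>i\<in>UNIV. \<gamma>$i)) * Lc"
    and fixpoint: "\<gamma> \<in> orthant \<Longrightarrow> bellman \<beta> P \<zeta> p r g gbar F \<gamma> x s = ereal (F \<gamma> x s)"
begin

definition bellman_rhs :: "real^'i \<Rightarrow> real^'i \<Rightarrow> 'x \<Rightarrow> 's \<Rightarrow> 'a \<Rightarrow> real" where
  "bellman_rhs \<gamma> l x s u = r x u s + (\<Sum>i\<in>UNIV. \<gamma>$i * g i x u s + l$i * (g i x u s - gbar i))
     + \<beta> * (\<Sum>s'\<in>UNIV. P s s' * F (\<gamma> + l) (\<zeta> x u s) s')"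

lemma bellman_attained:
  assumes "\<gamma> \<in> orthant" "l \<in> orthant"
  shows "\<exists>u\<in>Aadm p x s. F \<gamma> x s \<le> bellman_rhs \<gamma> l x s u"
proof -
  let ?A = "Aadm p x s" and ?v = "\<lambda>u. ereal (bellman_rhs \<gamma> l x s u)"
  have "ereal (F \<gamma> x s) = bellman \<beta> P \<zeta> p r g gbar F \<gamma> x s"
    using fixpoint[OF assms(1)] by simp
  also have "\<dots> \<le> (SUP u\<in>?A. ?v u)"
    unfolding bellman_def bellman_rhs_def by (rule INF_lower[OF assms(2)])
  finally have le: "ereal (F \<gamma> x s) \<le> (SUP u\<in>?A. ?v u)" .
  then have "?A \<noteq> {}"
    by (auto simp: bot_ereal_def)
  then have "(SUP u\<in>?A. ?v u) \<in> ?v ` ?A"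
    by (simp add: cSup_eq_Max)
  then show ?thesis
    using le by auto
qed

definition greedy :: "real^'i \<Rightarrow> real^'i \<Rightarrow> 'x \<Rightarrow> 's \<Rightarrow> 'a" where
  "greedy \<gamma> l x s = (SOME u. u \<in> Aadm p x s \<and> F \<gamma> x s \<le> bellman_rhs \<gamma> l x s u)"

lemma greedy_attains:
  assumes "\<gamma> \<in> orthant" "l \<in> orthant"
  shows "greedy \<gamma> l x s \<in> Aadm p x s" and "F \<gamma> x s \<le> bellman_rhs \<gamma> l x s (greedy \<gamma> l x s)"
  using someI_ex[OF bellman_attained[OF assms, of x s, unfolded Bex_def]]
  unfolding greedy_def by blast+

end

locale greedy_plan = bellman_fixpoint P \<beta> \<zeta> p r g gbar F Br Bg Lc
  for P :: "'s::finite \<Rightarrow> 's \<Rightarrow> real" and \<beta> :: real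
    and \<zeta> :: "'x \<Rightarrow> 'a::finite \<Rightarrow> 's \<Rightarrow> 'x"
    and p r :: "'x \<Rightarrow> 'a \<Rightarrow> 's \<Rightarrow> real"
    and g :: "'i::finite \<Rightarrow> 'x \<Rightarrow> 'a \<Rightarrow> 's \<Rightarrow> real"
    and gbar :: "'i \<Rightarrow> real"
    and F :: "real^'i \<Rightarrow> 'x \<Rightarrow> 's \<Rightarrow> real"
    and Br Bg Lc :: real +
  fixes \<gamma> :: "real^'i" and x0 :: 'x and s0 :: 's
    and lam :: "('s \<times> 'a) list \<Rightarrow> 's \<Rightarrow> 'i \<Rightarrow> real"
  assumes gamma: "\<gamma> \<in> orthant"
    and lam: "lam \<in> LamSet \<beta> P s0"
begin

lemma lam_nonneg: "0 \<le> lam hh s i"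
  using lam unfolding LamSet_def by blast

definition lam_vec :: "('s \<times> 'a) list \<Rightarrow> 's \<Rightarrow> real^'i" where
  "lam_vec hh s = (\<chi> i. lam hh s i)"

lemma lam_vec_orthant: "lam_vec hh s \<in> orthant"
  by (simp add: orthant_def lam_vec_def lam_nonneg)

fun plan_state :: "'s list \<Rightarrow> 'x \<times> (real^'i) \<times> ('s \<times> 'a) list" where
  "plan_state (s' # s # h) = (case plan_state (s # h) of (x, \<gamma>', hh) \<Rightarrow>
     (let u = greedy \<gamma>' (lam_vec hh s) x s in (\<zeta> x u s, \<gamma>' + lam_vec hh s, (s, u) # hh)))"
| "plan_state _ = (x0, \<gamma>, [])"

definition plan_x :: "'s list \<Rightarrow> 'x" where
  "plan_x h = fst (plan_state h)"

definition plan_gamma :: "'s list \<Rightarrow> real^'i" where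
  "plan_gamma h = fst (snd (plan_state h))"

definition plan_preh :: "'s list \<Rightarrow> ('s \<times> 'a) list" where
  "plan_preh h = snd (snd (plan_state h))"

definition plan :: "'s list \<Rightarrow> 'a" where
  "plan h = greedy (plan_gamma h) (lam_vec (plan_preh h) (hd h)) (plan_x h) (hd h)"

lemma plan_single: "plan_x [s] = x0" "plan_gamma [s] = \<gamma>" "plan_preh [s] = []"
  by (simp_all add: plan_x_def plan_gamma_def plan_preh_def)

lemma plan_Cons:
  assumes "h \<noteq> []"
  shows "plan_x (s' # h) = \<zeta> (plan_x h) (plan h) (hd h)"
    and "plan_gamma (s' # h) = plan_gamma h + lam_vec (plan_preh h) (hd h)"
    and "plan_preh (s' # h) = (hd h, plan h) # plan_preh h"
proof -
  obtain s t where h: "h = s # t"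
    using assms by (cases h) auto
  have "plan_state (s' # h) = (\<zeta> (plan_x h) (plan h) (hd h),
      plan_gamma h + lam_vec (plan_preh h) (hd h), (hd h, plan h) # plan_preh h)"
    unfolding h plan_state.simps(1) plan_x_def plan_gamma_def plan_preh_def plan_def
    by (simp add: split_beta Let_def)
  then show "plan_x (s' # h) = \<zeta> (plan_x h) (plan h) (hd h)"
    and "plan_gamma (s' # h) = plan_gamma h + lam_vec (plan_preh h) (hd h)"
    and "plan_preh (s' # h) = (hd h, plan h) # plan_preh h"
    by (simp_all only: plan_x_def plan_gamma_def plan_preh_def fst_conv snd_conv)
qed

lemma xp_plan: "h \<noteq> [] \<Longrightarrow> xp \<zeta> plan x0 h = plan_x h"
proof (induction h rule: induct_list012)
  case (3 s' s h)
  then show ?case by (simp add: plan_Cons)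
qed (simp_all add: plan_single)

lemma genh_plan: "h \<noteq> [] \<Longrightarrow> genh plan h = plan_preh h"
proof (induction h rule: induct_list012)
  case (3 s' s h)
  then show ?case by (simp add: plan_Cons)
qed (simp_all add: plan_single)

lemma gamma_le_plan_gamma: "h \<noteq> [] \<Longrightarrow> \<gamma>$i \<le> plan_gamma h $ i"
proof (induction h rule: induct_list012)
  case (3 s' s h)
  then show ?case
    using lam_nonneg[of "plan_preh (s # h)" s i] by (simp add: plan_Cons lam_vec_def)
qed (simp_all add: plan_single)

lemma plan_gamma_orthant: "h \<noteq> [] \<Longrightarrow> plan_gamma h \<in> orthant"
  using gamma gamma_le_plan_gamma unfolding orthant_def by (blast intro: order_trans)

lemma plan_Ainf: "plan \<in> Ainf p \<zeta> x0"
proof -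
  have "plan h \<in> Aadm p (plan_x h) (hd h)" if "h \<noteq> []" for h
    unfolding plan_def by (rule greedy_attains(1)[OF plan_gamma_orthant[OF that] lam_vec_orthant])
  then show ?thesis
    unfolding Ainf_def using xp_plan by auto
qed

lemma plan_bellman:
  "h \<noteq> [] \<Longrightarrow> F (plan_gamma h) (plan_x h) (hd h)
     \<le> bellman_rhs (plan_gamma h) (lam_vec (plan_preh h) (hd h)) (plan_x h) (hd h) (plan h)"
  unfolding plan_def by (rule greedy_attains(2)[OF plan_gamma_orthant lam_vec_orthant])

abbreviation gcont :: "'i \<Rightarrow> 's list \<Rightarrow> real" where
  "gcont i \<equiv> cont \<beta> P \<zeta> plan x0 (g i)"

lemma gcont_unfold:
  "h \<noteq> [] \<Longrightarrow> gcont i h = g i (plan_x h) (plan h) (hd h) + \<beta> * (\<Sum>s\<in>UNIV. P (hd h) s * gcont i (s # h))"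
  using cont_unfold[of "g i" Bg \<zeta> plan x0 h] g_bound xp_plan by simp

lemma abs_gcont_le: "\<bar>gcont i h\<bar> \<le> Bg / (1 - \<beta>)"
  by (rule abs_cont_le[OF g_bound])

definition lagr_term :: "'s list \<Rightarrow> real" where
  "lagr_term h = (let x = xp \<zeta> plan x0 h; u = plan h; s = hd h in
     r x u s + (\<Sum>i\<in>UNIV. \<gamma>$i * g i x u s) + (\<Sum>i\<in>UNIV. lam (genh plan h) s i * (gcont i h - gbar i)))"

lemma lagr_plan: "lagr \<beta> P \<zeta> r g gbar plan lam \<gamma> x0 s0 = (\<Sum>t. \<beta> ^ t * ext_expect P t [s0] lagr_term)"
  by (simp add: lagr_def ext_expect_def lagr_term_def Let_def)

lemma lagr_term_eq:
  assumes "h \<noteq> []"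
  shows "lagr_term h = r (plan_x h) (plan h) (hd h) + (\<Sum>i\<in>UNIV. \<gamma>$i * g i (plan_x h) (plan h) (hd h))
    + (\<Sum>i\<in>UNIV. lam_vec (plan_preh h) (hd h) $ i * (gcont i h - gbar i))"
  by (simp add: lagr_term_def Let_def xp_plan[OF assms] genh_plan[OF assms] lam_vec_def)

definition potential :: "'s list \<Rightarrow> real" where
  "potential h = F (plan_gamma h) (plan_x h) (hd h) - (\<Sum>i\<in>UNIV. (plan_gamma h - \<gamma>)$i * gcont i h)"

lemma potential_step:
  assumes h: "h \<noteq> []"
  shows "potential h \<le> lagr_term h + \<beta> * (\<Sum>s'\<in>UNIV. P (hd h) s' * potential (s' # h))"
proof -
  define x u s \<Gamma> l where "x = plan_x h" and "u = plan h" and "s = hd h"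
    and "\<Gamma> = plan_gamma h" and "l = lam_vec (plan_preh h) s"
  define D where "D i = (\<Sum>s'\<in>UNIV. P s s' * gcont i (s' # h))" for i
  define F' where "F' s' = F (\<Gamma> + l) (\<zeta> x u s) s'" for s'
  have bellman: "F \<Gamma> x s \<le> r x u s + (\<Sum>i\<in>UNIV. \<Gamma>$i * g i x u s + l$i * (g i x u s - gbar i))
      + \<beta> * (\<Sum>s'\<in>UNIV. P s s' * F' s')"
    using plan_bellman[OF h] by (simp add: bellman_rhs_def x_def u_def s_def \<Gamma>_def l_def F'_def)
  have gcont_h: "gcont i h = g i x u s + \<beta> * D i" for i
    using gcont_unfold[OF h] by (simp add: x_def u_def s_def D_def)
  have lagr_h: "lagr_term h = r x u s + (\<Sum>i\<in>UNIV. \<gamma>$i * g i x u s) + (\<Sum>i\<in>UNIV. l$i * (gcont i h - gbar i))"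
    using lagr_term_eq[OF h] by (simp add: x_def u_def s_def l_def)
  have "potential (s' # h) = F' s' - (\<Sum>i\<in>UNIV. (\<Gamma> + l - \<gamma>)$i * gcont i (s' # h))" for s'
    by (simp add: potential_def plan_Cons[OF h] F'_def x_def u_def s_def \<Gamma>_def l_def)
  then have "(\<Sum>s'\<in>UNIV. P s s' * potential (s' # h))
      = (\<Sum>s'\<in>UNIV. P s s' * F' s') - (\<Sum>s'\<in>UNIV. \<Sum>i\<in>UNIV. P s s' * ((\<Gamma> + l - \<gamma>)$i * gcont i (s' # h)))"
    by (simp add: right_diff_distrib sum_subtractf sum_distrib_left)
  also have "(\<Sum>s'\<in>UNIV. \<Sum>i\<in>UNIV. P s s' * ((\<Gamma> + l - \<gamma>)$i * gcont i (s' # h)))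
      = (\<Sum>i\<in>UNIV. (\<Gamma> + l - \<gamma>)$i * D i)"
    unfolding D_def by (subst sum.swap) (simp only: sum_distrib_left mult.left_commute)
  finally have next_potential: "(\<Sum>s'\<in>UNIV. P s s' * potential (s' # h))
      = (\<Sum>s'\<in>UNIV. P s s' * F' s') - (\<Sum>i\<in>UNIV. (\<Gamma> + l - \<gamma>)$i * D i)" .
  have potential_h: "potential h = F \<Gamma> x s - (\<Sum>i\<in>UNIV. (\<Gamma> - \<gamma>)$i * gcont i h)"
    by (simp add: potential_def \<Gamma>_def x_def s_def)
  have rearrange: "(\<Sum>i\<in>UNIV. \<Gamma>$i * g i x u s + l$i * (g i x u s - gbar i))
      = (\<Sum>i\<in>UNIV. \<gamma>$i * g i x u s) + (\<Sum>i\<in>UNIV. l$i * (gcont i h - gbar i))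
        - \<beta> * (\<Sum>i\<in>UNIV. (\<Gamma> + l - \<gamma>)$i * D i) + (\<Sum>i\<in>UNIV. (\<Gamma> - \<gamma>)$i * gcont i h)"
    by (simp add: gcont_h sum_distrib_left sum.distrib[symmetric] sum_subtractf[symmetric] algebra_simps)
  show ?thesis
    using bellman unfolding potential_h lagr_h next_potential s_def[symmetric] rearrange
    by (simp add: algebra_simps)
qed

lemma potential_telescope:
  "F \<gamma> x0 s0 \<le> (\<Sum>t<T. \<beta> ^ t * ext_expect P t [s0] lagr_term) + \<beta> ^ T * ext_expect P T [s0] potential"
proof (induction T)
  case 0
  then show ?case by (simp add: potential_def plan_single)
next
  case (Suc T)
  have "ext_expect P T [s0] potential
      \<le> ext_expect P T [s0] (\<lambda>h. lagr_term h + \<beta> * (\<Sum>s'\<in>UNIV. P (hd h) s' * potential (s' # h)))"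
    by (rule ext_expect_mono) (rule potential_step, simp)
  also have "\<dots> = ext_expect P T [s0] lagr_term + \<beta> * ext_expect P (Suc T) [s0] potential"
    by (simp only: ext_expect_add ext_expect_mult_left ext_expect_Suc)
  finally have "\<beta> ^ T * ext_expect P T [s0] potential
      \<le> \<beta> ^ T * (ext_expect P T [s0] lagr_term + \<beta> * ext_expect P (Suc T) [s0] potential)"
    by (rule mult_left_mono) (simp add: discount_nonneg)
  then show ?case
    using Suc.IH by (simp add: algebra_simps)
qed

definition lam_mass :: "nat \<Rightarrow> real" where
  "lam_mass t = \<beta> ^ t * ext_expect P t [s0] (\<lambda>h. \<Sum>i\<in>UNIV. lam (plan_preh h) (hd h) i)"

definition excess_mass :: "nat \<Rightarrow> real" where
  "excess_mass t = \<beta> ^ t * ext_expect P t [s0] (\<lambda>h. \<Sum>i\<in>UNIV. (plan_gamma h - \<gamma>)$i)"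

lemma lam_mass_nonneg: "0 \<le> lam_mass t"
  unfolding lam_mass_def
  by (intro mult_nonneg_nonneg ext_expect_nonneg sum_nonneg lam_nonneg) (simp add: discount_nonneg)

lemma excess_mass_Suc: "excess_mass (Suc t) = \<beta> * (excess_mass t + lam_mass t)"
proof -
  have "ext_expect P (Suc t) [s0] (\<lambda>h. \<Sum>i\<in>UNIV. (plan_gamma h - \<gamma>)$i)
      = ext_expect P t [s0] (\<lambda>h. (\<Sum>i\<in>UNIV. (plan_gamma h - \<gamma>)$i) + (\<Sum>i\<in>UNIV. lam (plan_preh h) (hd h) i))"
    unfolding ext_expect_Suc
    by (rule ext_expect_cong)
      (simp add: plan_Cons lam_vec_def sum.distrib[symmetric] algebra_simps
        sum_distrib_right[symmetric] row_sum)
  then show ?thesis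
    by (simp add: excess_mass_def lam_mass_def ext_expect_add algebra_simps)
qed

(* The summability condition of \<Lambda> sums over all action histories; the plan picks out one of them. *)
lemma lam_mass_le_LamSet_term:
  "lam_mass t \<le> (\<Sum>e\<in>{e::'s list. length e = t}. \<Sum>acts\<in>{acts::'a list. length acts = t}.
     \<Sum>i\<in>UNIV. \<beta> ^ t * lam (zip (tl (e @ [s0])) acts) (hd (e @ [s0])) i * cp P e [s0])"
  (is "_ \<le> (\<Sum>e\<in>_. \<Sum>acts\<in>_. ?term e acts)")
proof -
  have preh_zip: "zip (tl (e @ [s0])) (map snd (plan_preh (e @ [s0]))) = plan_preh (e @ [s0])" for e
    using genh_eq_zip[of plan "e @ [s0]"] genh_plan[of "e @ [s0]"] by simp
  have "lam_mass t = (\<Sum>e\<in>{e::'s list. length e = t}. ?term e (map snd (plan_preh (e @ [s0]))))"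
    by (simp add: lam_mass_def ext_expect_def preh_zip sum_distrib_left sum_distrib_right mult_ac)
  also have "\<dots> \<le> (\<Sum>e\<in>{e::'s list. length e = t}. \<Sum>acts\<in>{acts::'a list. length acts = t}. ?term e acts)"
  proof (rule sum_mono, rule member_le_sum)
    fix e :: "'s list"
    assume "e \<in> {e. length e = t}"
    then show "map snd (plan_preh (e @ [s0])) \<in> {acts. length acts = t}"
      using length_genh[of plan "e @ [s0]"] genh_plan[of "e @ [s0]"] by simp
  qed (use finite_lists_length_eq[of "UNIV :: 'a set"] in
      \<open>auto intro!: sum_nonneg mult_nonneg_nonneg lam_nonneg cp_nonneg simp: discount_nonneg\<close>)
  finally show ?thesis .
qed

lemma summable_lam_mass: "summable lam_mass"
proof -
  have "summable (\<lambda>t. \<Sum>e\<in>{e::'s list. length e = t}. \<Sum>acts\<in>{acts::'a list. length acts = t}.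
     \<Sum>i\<in>UNIV. \<beta> ^ t * lam (zip (tl (e @ [s0])) acts) (hd (e @ [s0])) i * cp P e [s0])"
    using lam unfolding LamSet_def by blast
  then show ?thesis
    by (rule summable_comparison_test') (use lam_mass_le_LamSet_term lam_mass_nonneg in simp)
qed

lemma excess_mass_LIMSEQ_zero: "excess_mass \<longlonglongrightarrow> 0"
proof (rule discounted_accumulation_LIMSEQ_zero[where m = lam_mass, OF discount_nonneg discount_less_one])
  show "excess_mass 0 = 0"
    by (simp add: excess_mass_def plan_single)
qed (simp_all add: excess_mass_Suc lam_mass_nonneg summable_lam_mass)

lemma excess_nonneg: "h \<noteq> [] \<Longrightarrow> 0 \<le> (plan_gamma h - \<gamma>)$i"
  using gamma_le_plan_gamma by simp

lemma potential_le:
  assumes h: "h \<noteq> []"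
  shows "potential h \<le> (1 + (\<Sum>i\<in>UNIV. \<gamma>$i)) * Lc
    + (\<bar>Lc\<bar> + Bg / (1 - \<beta>)) * (\<Sum>i\<in>UNIV. (plan_gamma h - \<gamma>)$i)"
proof -
  let ?S = "\<Sum>i\<in>UNIV. (plan_gamma h - \<gamma>)$i"
  have "F (plan_gamma h) (plan_x h) (hd h) \<le> (1 + (\<Sum>i\<in>UNIV. plan_gamma h $ i)) * Lc"
    by (rule F_upper[OF plan_gamma_orthant[OF h]])
  also have "(\<Sum>i\<in>UNIV. plan_gamma h $ i) = (\<Sum>i\<in>UNIV. \<gamma>$i) + ?S"
    by (simp add: sum.distrib[symmetric])
  finally have "F (plan_gamma h) (plan_x h) (hd h) \<le> (1 + (\<Sum>i\<in>UNIV. \<gamma>$i)) * Lc + ?S * Lc"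
    by (simp add: algebra_simps)
  moreover have "?S * Lc \<le> ?S * \<bar>Lc\<bar>"
    by (rule mult_left_mono) (simp_all add: sum_nonneg gamma_le_plan_gamma h)
  ultimately have F_le: "F (plan_gamma h) (plan_x h) (hd h) \<le> (1 + (\<Sum>i\<in>UNIV. \<gamma>$i)) * Lc + ?S * \<bar>Lc\<bar>"
    by linarith
  have "- (\<Sum>i\<in>UNIV. (plan_gamma h - \<gamma>)$i * gcont i h) = (\<Sum>i\<in>UNIV. (plan_gamma h - \<gamma>)$i * - gcont i h)"
    by (simp add: sum_negf[symmetric])
  also have "\<dots> \<le> (\<Sum>i\<in>UNIV. (plan_gamma h - \<gamma>)$i * (Bg / (1 - \<beta>)))"
    by (intro sum_mono mult_left_mono excess_nonneg h) (use abs_gcont_le in \<open>metis abs_le_D2\<close>)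
  also have "\<dots> = ?S * (Bg / (1 - \<beta>))"
    by (simp only: sum_distrib_right)
  finally show ?thesis
    using F_le unfolding potential_def distrib_right by (simp add: mult.commute)
qed

lemma potential_remainder_le:
  "\<beta> ^ T * ext_expect P T [s0] potential
    \<le> \<beta> ^ T * ((1 + (\<Sum>i\<in>UNIV. \<gamma>$i)) * Lc) + (\<bar>Lc\<bar> + Bg / (1 - \<beta>)) * excess_mass T"
proof -
  let ?C0 = "(1 + (\<Sum>i\<in>UNIV. \<gamma>$i)) * Lc" and ?C1 = "\<bar>Lc\<bar> + Bg / (1 - \<beta>)"
  have "ext_expect P T [s0] potential \<le> ext_expect P T [s0] (\<lambda>h. ?C0 + ?C1 * (\<Sum>i\<in>UNIV. (plan_gamma h - \<gamma>)$i))"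
    by (rule ext_expect_mono) (rule potential_le, simp)
  also have "\<dots> = ?C0 + ?C1 * ext_expect P T [s0] (\<lambda>h. \<Sum>i\<in>UNIV. (plan_gamma h - \<gamma>)$i)"
    by (simp only: ext_expect_add ext_expect_mult_left ext_expect_const)
  finally show ?thesis
    using mult_left_mono[OF _ zero_le_power[OF discount_nonneg, of T]]
    by (fastforce simp: excess_mass_def algebra_simps)
qed

lemma abs_lagr_term_le:
  assumes h: "h \<noteq> []"
  shows "\<bar>lagr_term h\<bar> \<le> (Br + (\<Sum>i\<in>UNIV. \<bar>\<gamma>$i\<bar>) * Bg)
    + (Bg / (1 - \<beta>) + (\<Sum>i\<in>UNIV. \<bar>gbar i\<bar>)) * (\<Sum>i\<in>UNIV. lam (plan_preh h) (hd h) i)"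
proof -
  define x u s l where "x = plan_x h" and "u = plan h" and "s = hd h" and "l = lam (plan_preh h) (hd h)"
  let ?A = "Bg / (1 - \<beta>) + (\<Sum>i\<in>UNIV. \<bar>gbar i\<bar>)"
  have "\<bar>\<Sum>i\<in>UNIV. \<gamma>$i * g i x u s\<bar> \<le> (\<Sum>i\<in>UNIV. \<bar>\<gamma>$i\<bar> * Bg)"
    by (rule order_trans[OF sum_abs sum_mono]) (simp add: abs_mult mult_left_mono g_bound)
  then have constraint_part: "\<bar>\<Sum>i\<in>UNIV. \<gamma>$i * g i x u s\<bar> \<le> (\<Sum>i\<in>UNIV. \<bar>\<gamma>$i\<bar>) * Bg"
    by (simp add: sum_distrib_right)
  have "\<bar>l i * (gcont i h - gbar i)\<bar> \<le> l i * ?A" for i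
  proof -
    have "\<bar>gbar i\<bar> \<le> (\<Sum>i\<in>UNIV. \<bar>gbar i\<bar>)"
      by (rule member_le_sum) auto
    then have "\<bar>gcont i h - gbar i\<bar> \<le> ?A"
      using abs_gcont_le[of i h] by linarith
    then show ?thesis
      by (simp add: abs_mult l_def lam_nonneg mult_left_mono)
  qed
  then have "\<bar>\<Sum>i\<in>UNIV. l i * (gcont i h - gbar i)\<bar> \<le> (\<Sum>i\<in>UNIV. l i * ?A)"
    by (rule order_trans[OF sum_abs sum_mono])
  also have "\<dots> = ?A * (\<Sum>i\<in>UNIV. l i)"
    unfolding sum_distrib_right[symmetric] by (rule mult.commute)
  finally have multiplier_part: "\<bar>\<Sum>i\<in>UNIV. l i * (gcont i h - gbar i)\<bar> \<le> ?A * (\<Sum>i\<in>UNIV. l i)" .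
  have "lagr_term h = r x u s + (\<Sum>i\<in>UNIV. \<gamma>$i * g i x u s) + (\<Sum>i\<in>UNIV. l i * (gcont i h - gbar i))"
    using lagr_term_eq[OF h] by (simp add: x_def u_def s_def l_def lam_vec_def)
  then show ?thesis
    using r_bound[of x u s] constraint_part multiplier_part by (simp add: l_def)
qed

lemma summable_lagr_terms: "summable (\<lambda>t. \<beta> ^ t * ext_expect P t [s0] lagr_term)"
proof (rule summable_comparison_test')
  define A0 A1 where "A0 = Br + (\<Sum>i\<in>UNIV. \<bar>\<gamma>$i\<bar>) * Bg" and "A1 = Bg / (1 - \<beta>) + (\<Sum>i\<in>UNIV. \<bar>gbar i\<bar>)"
  let ?L = "\<lambda>h. \<Sum>i\<in>UNIV. lam (plan_preh h) (hd h) i"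
  show "summable (\<lambda>t. A0 * \<beta> ^ t + A1 * lam_mass t)"
    by (intro summable_add summable_geometric_bound summable_mult summable_lam_mass)
  fix t
  have "\<bar>ext_expect P t [s0] lagr_term\<bar> \<le> ext_expect P t [s0] (\<lambda>h. A0 + A1 * ?L h)"
    unfolding A0_def A1_def by (rule abs_ext_expect_le_ext_expect, rule abs_lagr_term_le) simp
  then have "\<bar>ext_expect P t [s0] lagr_term\<bar> \<le> A0 + A1 * ext_expect P t [s0] ?L"
    by (simp only: ext_expect_add ext_expect_mult_left ext_expect_const)
  then have "\<bar>ext_expect P t [s0] lagr_term\<bar> * \<beta> ^ t \<le> (A0 + A1 * ext_expect P t [s0] ?L) * \<beta> ^ t"
    by (rule mult_right_mono) (simp add: discount_nonneg)
  then show "norm (\<beta> ^ t * ext_expect P t [s0] lagr_term) \<le> A0 * \<beta> ^ t + A1 * lam_mass t"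
    using discount_nonneg by (simp add: lam_mass_def abs_mult algebra_simps)
qed

lemma F_le_lagr_plan: "F \<gamma> x0 s0 \<le> lagr \<beta> P \<zeta> r g gbar plan lam \<gamma> x0 s0"
proof (rule LIMSEQ_le_const)
  let ?C0 = "(1 + (\<Sum>i\<in>UNIV. \<gamma>$i)) * Lc" and ?C1 = "\<bar>Lc\<bar> + Bg / (1 - \<beta>)"
  let ?S = "\<lambda>T. \<Sum>t<T. \<beta> ^ t * ext_expect P t [s0] lagr_term"
  have partial_sums: "?S \<longlonglongrightarrow> lagr \<beta> P \<zeta> r g gbar plan lam \<gamma> x0 s0"
    unfolding lagr_plan using summable_lagr_terms by (simp add: summable_LIMSEQ)
  have powers: "(\<lambda>T. \<beta> ^ T) \<longlonglongrightarrow> 0"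
    by (rule LIMSEQ_power_zero) (use discount_nonneg discount_less_one in simp)
  have "(\<lambda>T. ?S T + (\<beta> ^ T * ?C0 + ?C1 * excess_mass T))
      \<longlonglongrightarrow> lagr \<beta> P \<zeta> r g gbar plan lam \<gamma> x0 s0 + (0 * ?C0 + ?C1 * 0)"
    by (intro tendsto_intros partial_sums powers excess_mass_LIMSEQ_zero)
  then show "(\<lambda>T. ?S T + (\<beta> ^ T * ?C0 + ?C1 * excess_mass T)) \<longlonglongrightarrow> lagr \<beta> P \<zeta> r g gbar plan lam \<gamma> x0 s0"
    by simp
  show "\<exists>N. \<forall>T\<ge>N. F \<gamma> x0 s0 \<le> ?S T + (\<beta> ^ T * ?C0 + ?C1 * excess_mass T)"
  proof (intro exI allI impI)
    fix T :: nat
    show "F \<gamma> x0 s0 \<le> ?S T + (\<beta> ^ T * ?C0 + ?C1 * excess_mass T)"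
      using potential_telescope[of T] potential_remainder_le[of T] by (simp add: algebra_simps)
  qed
qed

end

context bellman_fixpoint
begin

lemma F_le_Dval:
  assumes "\<gamma> \<in> orthant"
  shows "ereal (F \<gamma> x s) \<le> Dval \<beta> P \<zeta> p r g gbar \<gamma> x s"
  unfolding Dval_def
proof (rule INF_greatest)
  fix lam :: "('s \<times> 'a) list \<Rightarrow> 's \<Rightarrow> 'i \<Rightarrow> real"
  assume "lam \<in> LamSet \<beta> P s"
  then interpret greedy_plan P \<beta> \<zeta> p r g gbar F Br Bg Lc \<gamma> x s lam
    using assms by unfold_locales
  show "ereal (F \<gamma> x s) \<le> (SUP a\<in>Ainf p \<zeta> x. ereal (lagr \<beta> P \<zeta> r g gbar a lam \<gamma> x s))"
    by (rule SUP_upper2[OF plan_Ainf]) (simp add: F_le_lagr_plan)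
qed

end

lemma abs_le_supn:
  assumes "bdd_above (range (\<lambda>z. \<bar>f (fst z) (fst (snd z)) (snd (snd z))\<bar>))"
  shows "\<bar>f x u s\<bar> \<le> supn f"
  unfolding supn_def using cSUP_upper[OF UNIV_I assms, of "(x, u, s)"] by simp

lemma abs_le_sum_supn:
  fixes g :: "'i::finite \<Rightarrow> 'x \<Rightarrow> 'a \<Rightarrow> 's \<Rightarrow> real"
  assumes "\<forall>i. bdd_above (range (\<lambda>z. \<bar>g i (fst z) (fst (snd z)) (snd (snd z))\<bar>))"
  shows "\<bar>g i x u s\<bar> \<le> (\<Sum>j\<in>UNIV. supn (g j))"
proof -
  have g_le_supn: "\<bar>g j x u s\<bar> \<le> supn (g j)" for j x u s
    by (rule abs_le_supn[of "g j"]) (rule assms[rule_format])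
  have "supn (g i) \<le> (\<Sum>j\<in>UNIV. supn (g j))"
    by (rule member_le_sum) (use order_trans[OF abs_ge_zero g_le_supn] in auto)
  then show ?thesis
    using g_le_supn[of i x u s] by linarith
qed

theorem lemma3p7:
  fixes \<beta> :: real
    and P :: "'s::finite \<Rightarrow> 's \<Rightarrow> real"
    and \<zeta> :: "'x::countable \<Rightarrow> 'a::finite \<Rightarrow> 's \<Rightarrow> 'x"
    and p r :: "'x \<Rightarrow> 'a \<Rightarrow> 's \<Rightarrow> real"
    and g :: "'i::finite \<Rightarrow> 'x \<Rightarrow> 'a \<Rightarrow> 's \<Rightarrow> real"
    and gbar :: "'i \<Rightarrow> real"
    and F :: "real^'i \<Rightarrow> 'x \<Rightarrow> 's \<Rightarrow> real"
  assumes beta: "0 < \<beta>" "\<beta> < 1"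
    and P_pos: "\<forall>s s'. 0 < P s s'"
    and P_sum: "\<forall>s. (\<Sum>s'\<in>UNIV. P s s') = 1"
    and r_bdd: "bdd_above (range (\<lambda>z. \<bar>r (fst z) (fst (snd z)) (snd (snd z))\<bar>))"
    and g_bdd: "\<forall>i. bdd_above (range (\<lambda>z. \<bar>g i (fst z) (fst (snd z)) (snd (snd z))\<bar>))"
    and feas: "\<forall>x0 s0. \<exists>a. feasible \<beta> P \<zeta> p g gbar a x0 s0"
    and FN: "inN \<beta> P \<zeta> p r g gbar F"
    and fixpt: "\<forall>\<gamma>\<in>orthant. \<forall>x s. bellman \<beta> P \<zeta> p r g gbar F \<gamma> x s = ereal (F \<gamma> x s)"
  shows "\<forall>\<gamma>\<in>orthant. \<forall>x s. ereal (F \<gamma> x s) \<le> Dval \<beta> P \<zeta> p r g gbar \<gamma> x s"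
proof -
  interpret bellman_fixpoint P \<beta> \<zeta> p r g gbar F "supn r" "\<Sum>j\<in>UNIV. supn (g j)" "Lconst \<beta> r g"
  proof
    show "0 \<le> P s s'" "(\<Sum>s'\<in>UNIV. P s s') = 1" for s s'
      using P_pos P_sum by (auto intro: less_imp_le)
    show "0 \<le> \<beta>" "\<beta> < 1"
      using beta by simp_all
    show "\<bar>r x u s\<bar> \<le> supn r" for x u s
      by (rule abs_le_supn[OF r_bdd])
    show "\<bar>g i x u s\<bar> \<le> (\<Sum>j\<in>UNIV. supn (g j))" for i x u s
      by (rule abs_le_sum_supn[OF g_bdd])
    show "F \<gamma> x s \<le> (1 + (\<Sum>i\<in>UNIV. \<gamma>$i)) * Lconst \<beta> r g" if "\<gamma> \<in> orthant" for \<gamma> x s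
      using FN that unfolding inN_def by blast
    show "bellman \<beta> P \<zeta> p r g gbar F \<gamma> x s = ereal (F \<gamma> x s)" if "\<gamma> \<in> orthant" for \<gamma> x s
      using fixpt that by blast
  qed
  show ?thesis
    using F_le_Dval by blast
qed

end
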